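(* Let $G$ be a complete geometric graph and let $B$ be a subgraph of $G$. If $B$ is a star of $G$ or a comb of $G$, then $B$ shares at least one edge with every simple spanning subgraph of $G$.
   Context: A geometric graph is a graph whose vertices are points in the plane in general position (no three collinear) and whose edges are straight segments between pairs of vertices; $G$ is complete if all pairs of vertices are joined. A geometric graph is simple if no two of its edges cross. A simple spanning subgraph of $G$ is a subgraph $H\subseteq G$ that is non-crossing and has no isolated vertices, i.e., every vertex of $G$ is incident to an edge of $H$. A star of $G$ is the set of all edges of $G$ emanating from a single vertex. A comb of $G$ is a simple spanning subgraph $B$ of $G$ such that: (1) the intersection of $B$ with the boundary of $\mathrm{conv}(V(G))$ is a simple path $P$; (2) each vertex in $V(G)\setminus P$ is connected by a unique edge of $B$ to an interior (non-endpoint) vertex of $P$; (3) for each edge $e$ of $B$, the line spanned by $e$ does not cross any edge of $B$. *)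

theory Defs
  imports "HOL-Analysis.Analysis"
begin

text \<open>Points are in the Euclidean plane; an edge is a two-element set of points,
  drawn as the straight segment (convex hull) between them.\<close>

type_synonym pt = "real^2"

definition general_position :: "pt set \<Rightarrow> bool" where
  "general_position V \<longleftrightarrow>
     (\<forall>a\<in>V. \<forall>b\<in>V. \<forall>c\<in>V. distinct [a, b, c] \<longrightarrow> \<not> collinear {a, b, c})"

definition complete_edges :: "pt set \<Rightarrow> pt set set" where
  "complete_edges V = {{a, b} | a b. a \<in> V \<and> b \<in> V \<and> a \<noteq> b}"

definition noncrossing :: "pt set set \<Rightarrow> bool" where
  "noncrossing H \<longleftrightarrow>
     (\<forall>e1\<in>H. \<forall>e2\<in>H. e1 \<noteq> e2 \<longrightarrow> convex hull e1 \<inter> convex hull e2 \<subseteq> e1 \<inter> e2)"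

definition simple_spanning :: "pt set \<Rightarrow> pt set set \<Rightarrow> bool" where
  "simple_spanning V H \<longleftrightarrow>
     H \<subseteq> complete_edges V \<and> noncrossing H \<and> (\<forall>v\<in>V. \<exists>e\<in>H. v \<in> e)"

definition star :: "pt set \<Rightarrow> pt \<Rightarrow> pt set set" where
  "star V v = {{v, w} | w. w \<in> V \<and> w \<noteq> v}"

definition is_star :: "pt set \<Rightarrow> pt set set \<Rightarrow> bool" where
  "is_star V B \<longleftrightarrow> (\<exists>v\<in>V. B = star V v)"

definition path_edges :: "pt list \<Rightarrow> pt set set" where
  "path_edges ps = (\<lambda>(a, b). {a, b}) ` set (zip ps (tl ps))"

definition path_interior :: "pt list \<Rightarrow> pt set" where
  "path_interior ps = set (butlast (tl ps))"

definition boundary_edges :: "pt set \<Rightarrow> pt set set \<Rightarrow> pt set set" where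
  "boundary_edges V B = {e \<in> B. convex hull e \<subseteq> frontier (convex hull V)}"

text \<open>Orientation determinant; the line through a b crosses the segment cd iff
  c and d lie strictly on opposite sides of that line.\<close>
definition orient :: "pt \<Rightarrow> pt \<Rightarrow> pt \<Rightarrow> real" where
  "orient a b c = (b$1 - a$1) * (c$2 - a$2) - (b$2 - a$2) * (c$1 - a$1)"

definition line_crosses :: "pt \<Rightarrow> pt \<Rightarrow> pt \<Rightarrow> pt \<Rightarrow> bool" where
  "line_crosses a b c d \<longleftrightarrow> orient a b c * orient a b d < 0"

definition comb :: "pt set \<Rightarrow> pt set set \<Rightarrow> bool" where
  "comb V B \<longleftrightarrow>
     simple_spanning V B \<and>
     (\<exists>ps. length ps \<ge> 2 \<and> distinct ps \<and> set ps \<subseteq> V \<and>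
        boundary_edges V B = path_edges ps \<and>
        (\<forall>v\<in>V - set ps. (\<exists>!e. e \<in> B \<and> v \<in> e) \<and>
                          (\<exists>p\<in>path_interior ps. {v, p} \<in> B))) \<and>
     (\<forall>a b c d. {a, b} \<in> B \<longrightarrow> {c, d} \<in> B \<longrightarrow> a \<noteq> b \<longrightarrow> \<not> line_crosses a b c d)"

end

theory Submission
  imports Defs
begin

text \<open>Every vertex meets an edge of H; for a star this edge, taken at the centre, lies in
  the star. For a comb with boundary path p 0, \<dots>, p k, label each vertex by the index of its
  position on the path (a path vertex) or of its attachment point (a tooth). The vertex p 0 has
  an H-neighbour with a larger label and p k has none, so for some i the vertex p i has an
  H-neighbour y with a larger label while p (i+1) only has H-neighbours x with labels at most i.
  Since no line through a comb edge crosses another comb edge, the comb forces an angular order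
  of the vertices around each path vertex, and this order makes the segments p i y and
  p (i+1) x cross, unless one of them is a comb edge.\<close>

lemma orient_swap: "orient a c b = - orient a b c"
  by (simp add: orient_def algebra_simps)

lemma orient_swap_first: "orient b a c = - orient a b c"
  by (simp add: orient_def algebra_simps)

lemma orient_rotate: "orient b c a = orient a b c"
  by (simp add: orient_def algebra_simps)

lemma orient_zero_collinear:
  assumes "orient a b c = 0"
  shows "collinear {a, b, c}"
proof (cases "a = c")
  case True
  then show ?thesis by (simp add: collinear_3_expand)
next
  case False
  have key: "(a$1 - c$1) * (b$2 - c$2) = (a$2 - c$2) * (b$1 - c$1)"
    using assms by (simp add: orient_def algebra_simps)
  have "a$1 - c$1 \<noteq> 0 \<or> a$2 - c$2 \<noteq> 0"
    using False by (auto simp: vec_eq_iff forall_2)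
  then obtain u where u: "b$1 - c$1 = u * (a$1 - c$1)" "b$2 - c$2 = u * (a$2 - c$2)"
  proof
    assume "a$1 - c$1 \<noteq> 0"
    with key show thesis
      by (intro that[of "(b$1 - c$1) / (a$1 - c$1)"]) (simp_all add: field_simps)
  next
    assume "a$2 - c$2 \<noteq> 0"
    with key show thesis
      by (intro that[of "(b$2 - c$2) / (a$2 - c$2)"]) (simp_all add: field_simps)
  qed
  then have "b = u *\<^sub>R a + (1 - u) *\<^sub>R c"
    unfolding vec_eq_iff forall_2 by (simp add: algebra_simps)
  then show ?thesis
    unfolding collinear_3_expand by blast
qed

lemma general_position_orient_nonzero:
  assumes "general_position V" "a \<in> V" "b \<in> V" "c \<in> V" "a \<noteq> b" "a \<noteq> c" "b \<noteq> c"
  shows "orient a b c \<noteq> 0"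
  using assms orient_zero_collinear unfolding general_position_def by fastforce

lemma opposite_signs_ratio:
  assumes "(x::real) * y < 0"
  shows "0 \<le> x / (x - y)" "x / (x - y) \<le> 1" "x - y \<noteq> 0"
proof -
  have "(x > 0 \<and> y < 0) \<or> (x < 0 \<and> y > 0)"
    using assms by (metis mult_less_0_iff)
  then show "0 \<le> x / (x - y)" "x / (x - y) \<le> 1" "x - y \<noteq> 0"
    by (auto simp: divide_simps)
qed

lemma straddling_segments_meet:
  assumes "orient a b c * orient a b d < 0" "orient c d a * orient c d b < 0"
  shows "convex hull {a, b} \<inter> convex hull {c, d} \<noteq> {}"
proof -
  define fa fb ga gd where
    "fa = orient c d a" "fb = orient c d b" "ga = orient a b c" "gd = orient a b d"
  define l m where "l = fa / (fa - fb)" "m = ga / (ga - gd)"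
  have l: "0 \<le> l" "l \<le> 1" "fa - fb \<noteq> 0"
    using opposite_signs_ratio[of fa fb] assms by (auto simp: l_m_def fa_fb_ga_gd_def)
  have m: "0 \<le> m" "m \<le> 1" "ga - gd \<noteq> 0"
    using opposite_signs_ratio[of ga gd] assms by (auto simp: l_m_def fa_fb_ga_gd_def)
  have "(a$1 * (fa - fb) + fa * (b$1 - a$1)) * (ga - gd)
      = (c$1 * (ga - gd) + ga * (d$1 - c$1)) * (fa - fb)"
    "(a$2 * (fa - fb) + fa * (b$2 - a$2)) * (ga - gd)
      = (c$2 * (ga - gd) + ga * (d$2 - c$2)) * (fa - fb)"
    unfolding fa_fb_ga_gd_def orient_def by algebra+
  then have "a$1 + l * (b$1 - a$1) = c$1 + m * (d$1 - c$1)"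
    "a$2 + l * (b$2 - a$2) = c$2 + m * (d$2 - c$2)"
    using l(3) m(3) unfolding l_m_def by (simp_all add: field_simps)
  then have "a + l *\<^sub>R (b - a) = c + m *\<^sub>R (d - c)"
    unfolding vec_eq_iff forall_2 by simp
  moreover have "a + l *\<^sub>R (b - a) \<in> convex hull {a, b}"
    using l by (auto simp: convex_hull_2_alt)
  moreover have "c + m *\<^sub>R (d - c) \<in> convex hull {c, d}"
    using m by (auto simp: convex_hull_2_alt)
  ultimately show ?thesis by auto
qed

lemma frontier_segment_supporting_line:
  assumes "finite V" "a \<in> V" "b \<in> V" "z0 \<in> V" "\<not> collinear {a, b, z0}"
    and "convex hull {a, b} \<subseteq> frontier (convex hull V)"
  obtains n :: pt where "n \<noteq> 0" "n \<bullet> a = n \<bullet> b" "\<And>z. z \<in> V \<Longrightarrow> n \<bullet> a \<le> n \<bullet> z"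
proof -
  define S where "S = convex hull V"
  define m where "m = (1/2) *\<^sub>R a + (1/2) *\<^sub>R b"
  have "m \<in> convex hull {a, b}"
    unfolding m_def convex_hull_2 by force
  moreover have "compact S"
    unfolding S_def using assms(1) by (simp add: finite_imp_compact_convex_hull)
  ultimately have mS: "m \<in> S" "m \<notin> interior S"
    using assms(6) by (auto simp: S_def frontier_def closure_closed compact_imp_closed)
  have "aff_dim {a, b, z0} \<le> aff_dim V"
    using assms(2-4) by (intro aff_dim_subset) auto
  moreover have "aff_dim {a, b, z0} > 1"
    using assms(5) collinear_aff_dim by (metis not_le)
  moreover have "aff_dim V \<le> 2"
    using aff_dim_le_DIM[of V] by simp
  ultimately have "aff_dim S = int DIM(pt)"
    unfolding S_def by (simp add: aff_dim_convex_hull)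
  then have "rel_interior S = interior S"
    by (intro rel_interior_interior) (simp only: aff_dim_eq_full)
  then obtain n where n: "n \<noteq> 0" "\<And>y. y \<in> S \<Longrightarrow> n \<bullet> m \<le> n \<bullet> y"
    using supporting_hyperplane_rel_boundary[of S m] mS by (metis S_def convex_convex_hull)
  have "n \<bullet> m \<le> n \<bullet> a" "n \<bullet> m \<le> n \<bullet> b" "n \<bullet> m = (n \<bullet> a + n \<bullet> b) / 2"
    using n(2) assms(2,3) by (auto simp: S_def hull_inc m_def inner_add_right)
  then show thesis
    using n by (intro that[of n]) (auto simp: S_def hull_inc)
qed

text \<open>Rotating the normal n by a right angle gives the direction of the line through a and b.\<close>
lemma supporting_line_orient:
  fixes n :: pt
  assumes "n \<noteq> 0" "n \<bullet> a = n \<bullet> b" "a \<noteq> b"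
  obtains K where "K \<noteq> 0" "\<And>z. (n \<bullet> (z - a)) * (norm (b - a))\<^sup>2 = K * orient a b z"
proof -
  define d1 d2 where "d1 = b$1 - a$1" "d2 = b$2 - a$2"
  define K where "K = n$2 * d1 - n$1 * d2"
  have inner2: "x \<bullet> y = x$1 * y$1 + x$2 * y$2" for x y :: pt
    by (simp add: inner_vec_def sum_2)
  have nd: "n$1 * d1 + n$2 * d2 = 0"
    using assms(2) by (simp add: inner2 d1_d2_def algebra_simps)
  have norm2: "(norm (b - a))\<^sup>2 = d1\<^sup>2 + d2\<^sup>2"
    unfolding power2_norm_eq_inner inner2 d1_d2_def by (simp add: power2_eq_square)
  have "d1\<^sup>2 + d2\<^sup>2 > 0"
    using assms(3) norm2 by (metis eq_iff_diff_eq_0 norm_eq_zero zero_less_power2)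
  have "K \<noteq> 0"
  proof
    assume "K = 0"
    then have "n$1 * (d1\<^sup>2 + d2\<^sup>2) = 0" "n$2 * (d1\<^sup>2 + d2\<^sup>2) = 0"
      using nd unfolding K_def power2_eq_square by algebra+
    then have "n$1 = 0" "n$2 = 0"
      using \<open>d1\<^sup>2 + d2\<^sup>2 > 0\<close> by auto
    then show False
      using assms(1) by (auto simp: vec_eq_iff forall_2)
  qed
  moreover have "(n \<bullet> (z - a)) * (norm (b - a))\<^sup>2 = K * orient a b z" for z
  proof -
    have "(n \<bullet> (z - a)) * (d1\<^sup>2 + d2\<^sup>2)
        = (n$1 * d1 + n$2 * d2) * (d1 * (z$1 - a$1) + d2 * (z$2 - a$2)) + K * orient a b z"
      unfolding inner2 K_def orient_def d1_d2_def power2_eq_square by (simp; algebra)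
    then show ?thesis
      using nd norm2 by simp
  qed
  ultimately show thesis
    by (rule that)
qed

lemma frontier_edge_strict_side:
  assumes "finite V" "general_position V" "a \<in> V" "b \<in> V" "a \<noteq> b"
    and "convex hull {a, b} \<subseteq> frontier (convex hull V)"
  obtains \<sigma> :: real where "\<sigma> = 1 \<or> \<sigma> = -1"
    "\<And>z. z \<in> V \<Longrightarrow> z \<noteq> a \<Longrightarrow> z \<noteq> b \<Longrightarrow> \<sigma> * orient a b z > 0"
proof (cases "V \<subseteq> {a, b}")
  case True
  then show thesis
    by (intro that[of 1]) auto
next
  case False
  then obtain z0 where z0: "z0 \<in> V" "z0 \<noteq> a" "z0 \<noteq> b"
    by blast
  then have "\<not> collinear {a, b, z0}"
    using assms(2-5) unfolding general_position_def by auto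
  then obtain n where n: "n \<noteq> 0" "n \<bullet> a = n \<bullet> b" "\<And>z. z \<in> V \<Longrightarrow> n \<bullet> a \<le> n \<bullet> z"
    using frontier_segment_supporting_line[OF assms(1,3,4) z0(1) _ assms(6)] by blast
  obtain K where K: "K \<noteq> 0" "\<And>z. (n \<bullet> (z - a)) * (norm (b - a))\<^sup>2 = K * orient a b z"
    using supporting_line_orient[OF n(1,2) assms(5)] by blast
  show thesis
  proof (rule that[of "sgn K"])
    show "sgn K = 1 \<or> sgn K = -1"
      using K(1) by (simp add: sgn_if)
  next
    fix z assume z: "z \<in> V" "z \<noteq> a" "z \<noteq> b"
    have "K * orient a b z \<ge> 0"
      using n(3)[OF z(1)] K(2)[of z] by (metis diff_ge_0_iff_ge inner_diff_right zero_le_mult_iff zero_le_power2)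
    moreover have "orient a b z \<noteq> 0"
      using general_position_orient_nonzero[OF assms(2,3,4) z(1) assms(5)] z by auto
    ultimately have "K * orient a b z > 0"
      using K(1) by (simp add: order_le_less)
    then show "sgn K * orient a b z > 0"
      by (cases "K > 0") (auto simp: sgn_if zero_less_mult_iff)
  qed
qed

text \<open>If s and t lie on opposite sides of the line P l, on the side of the line P q where l lies,
  and on the side of the line l w where P lies, then the segment s t meets the line P l between
  P and l, so the line s t separates P from l.\<close>
lemma crossing_line_separates:
  assumes "\<sigma> = 1 \<or> \<sigma> = -1"
    and ls: "\<sigma> * orient P l s < 0" and lt: "\<sigma> * orient P l t > 0"
    and qs: "\<sigma> * orient P q s \<ge> 0" and qt: "\<sigma> * orient P q t \<ge> 0"
    and ql: "\<sigma> * orient P q l > 0"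
    and ws: "orient l w s * orient l w P > 0" and wt: "orient l w t * orient l w P > 0"
    and "orient P t s \<noteq> 0" "orient s t P \<noteq> 0"
  shows "orient s t P * orient s t l < 0"
proof -
  define \<alpha> \<beta> \<gamma> where "\<alpha> = orient P t l" "\<beta> = orient P l s" "\<gamma> = orient P t s"
  \<comment> \<open>Pluecker-type relations between orientation determinants\<close>
  have I1: "\<alpha> * orient P q s + \<beta> * orient P q t = \<gamma> * orient P q l"
    and I2: "\<alpha> * orient l w s + \<beta> * orient l w t = (\<alpha> + \<beta> - \<gamma>) * orient l w P"
    and I3: "- \<gamma> * orient s t l = (\<alpha> + \<beta> - \<gamma>) * orient s t P"
    unfolding \<alpha>_\<beta>_\<gamma>_def orient_def by algebra+
  have \<alpha>: "\<sigma> * \<alpha> < 0" and \<beta>: "\<sigma> * \<beta> < 0"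
    using lt ls orient_swap[of P t l] unfolding \<alpha>_\<beta>_\<gamma>_def by simp_all
  have "(\<sigma> * \<gamma>) * (\<sigma> * orient P q l) = (\<sigma> * \<sigma>) * (\<gamma> * orient P q l)"
    by (simp add: algebra_simps)
  also have "\<dots> = (\<sigma> * \<alpha>) * (\<sigma> * orient P q s) + (\<sigma> * \<beta>) * (\<sigma> * orient P q t)"
    unfolding I1[symmetric] by (simp add: algebra_simps)
  also have "\<dots> \<le> 0"
    using \<alpha> \<beta> qs qt by (simp add: add_nonpos_nonpos mult_nonpos_nonneg)
  finally have "\<sigma> * \<gamma> < 0"
    using ql assms(1,9) unfolding \<alpha>_\<beta>_\<gamma>_def
    by (metis mult_pos_pos mult_eq_0_iff not_le order_le_less zero_neq_neg_one zero_neq_one)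
  have "(\<sigma> * (\<alpha> + \<beta> - \<gamma>)) * (orient l w P * orient l w P)
      = \<sigma> * orient l w P * ((\<alpha> + \<beta> - \<gamma>) * orient l w P)"
    by (simp add: algebra_simps)
  also have "\<dots> = (\<sigma> * \<alpha>) * (orient l w s * orient l w P) + (\<sigma> * \<beta>) * (orient l w t * orient l w P)"
    unfolding I2[symmetric] by (simp add: algebra_simps)
  also have "\<dots> < 0"
    using \<alpha> \<beta> ws wt by (simp add: add_neg_neg mult_neg_pos)
  finally have "\<sigma> * (\<alpha> + \<beta> - \<gamma>) < 0"
    by (metis mult_less_0_iff not_square_less_zero)
  have "(- (\<sigma> * \<gamma>)) * (orient s t P * orient s t l)
      = \<sigma> * orient s t P * (- \<gamma> * orient s t l)"
    by (simp add: algebra_simps)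
  also have "\<dots> = (\<sigma> * (\<alpha> + \<beta> - \<gamma>)) * (orient s t P * orient s t P)"
    unfolding I3 by (simp add: algebra_simps)
  also have "\<dots> < 0"
    using \<open>\<sigma> * (\<alpha> + \<beta> - \<gamma>) < 0\<close> assms(10)
    by (metis mult_neg_pos not_real_square_gt_zero)
  finally have "(- (\<sigma> * \<gamma>)) * (orient s t P * orient s t l) < 0" .
  with \<open>\<sigma> * \<gamma> < 0\<close> show ?thesis
    unfolding mult_less_0_iff[of "- (\<sigma> * \<gamma>)"] by linarith
qed

lemma same_sign_trans: "(x::real) * y > 0 \<Longrightarrow> y * z > 0 \<Longrightarrow> x * z > 0"
  by (auto simp: zero_less_mult_iff)

lemma simple_spanning_neighbour:
  assumes "simple_spanning V H" "v \<in> V"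
  obtains y where "y \<in> V" "y \<noteq> v" "{v, y} \<in> H"
proof -
  obtain e where "e \<in> H" "v \<in> e"
    using assms unfolding simple_spanning_def by blast
  moreover have "e \<in> complete_edges V"
    using assms(1) \<open>e \<in> H\<close> unfolding simple_spanning_def by blast
  ultimately show thesis
    using that unfolding complete_edges_def by (auto simp: insert_commute)
qed

lemma nat_transition: "P 0 \<Longrightarrow> \<not> P k \<Longrightarrow> \<exists>i<k. P i \<and> \<not> P (Suc i)"
proof (induction k)
  case (Suc k)
  then show ?case by (cases "P k") (auto intro: less_SucI)
qed simp

text \<open>The combinatorics of a comb with boundary path p 0, \<dots>, p k: idx z is the position of z on
  the path, or for a tooth z the position of the interior path vertex it is attached to, and
  \<sigma> says on which side of the path edges the vertex set lies.\<close>
locale comb_layout =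
  fixes V :: "pt set" and E :: "pt set set" and p :: "nat \<Rightarrow> pt" and k :: nat
    and idx :: "pt \<Rightarrow> nat" and \<sigma> :: real
  assumes inj_p: "inj_on p {..k}"
    and p_in_V: "j \<le> k \<Longrightarrow> p j \<in> V"
    and sign: "\<sigma> = 1 \<or> \<sigma> = -1"
    and idx_le: "z \<in> V \<Longrightarrow> idx z \<le> k"
    and p_idx: "z \<in> V \<Longrightarrow> z \<in> p ` {..k} \<Longrightarrow> p (idx z) = z"
    and tooth: "z \<in> V \<Longrightarrow> z \<notin> p ` {..k} \<Longrightarrow> 0 < idx z \<and> idx z < k \<and> {z, p (idx z)} \<in> E"
    and path_edge: "j < k \<Longrightarrow> {p j, p (Suc j)} \<in> E"
    and line_avoids_edges:
      "{a, b} \<in> E \<Longrightarrow> {c, d} \<in> E \<Longrightarrow> a \<noteq> b \<Longrightarrow> 0 \<le> orient a b c * orient a b d"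
    and edge_in_V: "{a, b} \<in> E \<Longrightarrow> a \<in> V \<and> b \<in> V"
    and orient_nonzero:
      "a \<in> V \<Longrightarrow> b \<in> V \<Longrightarrow> c \<in> V \<Longrightarrow> a \<noteq> b \<Longrightarrow> a \<noteq> c \<Longrightarrow> b \<noteq> c \<Longrightarrow> orient a b c \<noteq> 0"
    and path_side:
      "j < k \<Longrightarrow> z \<in> V \<Longrightarrow> z \<noteq> p j \<Longrightarrow> z \<noteq> p (Suc j) \<Longrightarrow> \<sigma> * orient (p j) (p (Suc j)) z > 0"
begin

lemma idx_p: "j \<le> k \<Longrightarrow> idx (p j) = j"
  using p_idx[of "p j"] p_in_V idx_le inj_p by (auto dest: inj_onD)

lemma p_eq_iff: "i \<le> k \<Longrightarrow> j \<le> k \<Longrightarrow> p i = p j \<longleftrightarrow> i = j"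
  using idx_p by metis

lemma ne_p_of_idx: "z \<in> V \<Longrightarrow> j \<le> k \<Longrightarrow> idx z \<noteq> j \<Longrightarrow> z \<noteq> p j"
  using idx_p by auto

lemma reverse: "comb_layout V E (\<lambda>j. p (k - j)) k (\<lambda>z. k - idx z) (- \<sigma>)"
proof
  have img: "(\<lambda>j. p (k - j)) ` {..k} = p ` {..k}"
  proof (rule subset_antisym)
    show "p ` {..k} \<subseteq> (\<lambda>j. p (k - j)) ` {..k}"
    proof (rule image_subsetI)
      fix j assume "j \<in> {..k}"
      then show "p j \<in> (\<lambda>j. p (k - j)) ` {..k}"
        by (intro image_eqI[of _ _ "k - j"]) auto
    qed
  qed auto
  have rev_step: "k - j = Suc (k - Suc j)" "k - Suc j < k" if "j < k" for j
    using that by auto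
  show "inj_on (\<lambda>j. p (k - j)) {..k}"
    by (rule inj_onI) (simp add: p_eq_iff)
  show "p (k - j) \<in> V" for j
    by (simp add: p_in_V)
  show "- \<sigma> = 1 \<or> - \<sigma> = -1"
    using sign by auto
  show "k - idx z \<le> k" for z
    by simp
  show "p (k - (k - idx z)) = z" if "z \<in> V" "z \<in> (\<lambda>j. p (k - j)) ` {..k}" for z
    using that p_idx[of z] idx_le[of z] img by simp
  show "0 < k - idx z \<and> k - idx z < k \<and> {z, p (k - (k - idx z))} \<in> E"
    if "z \<in> V" "z \<notin> (\<lambda>j. p (k - j)) ` {..k}" for z
    using that tooth[of z] img by auto
  show "{p (k - j), p (k - Suc j)} \<in> E" if "j < k" for j
    using path_edge[of "k - Suc j"] rev_step[OF that] by (simp add: insert_commute)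
  show "- \<sigma> * orient (p (k - j)) (p (k - Suc j)) z > 0"
    if "j < k" "z \<in> V" "z \<noteq> p (k - j)" "z \<noteq> p (k - Suc j)" for j z
    using path_side[of "k - Suc j" z] that rev_step[OF that(1)]
      orient_swap_first[of "p (k - j)" "p (k - Suc j)" z] by simp
qed (fact line_avoids_edges edge_in_V orient_nonzero)+

definition piece :: "nat \<Rightarrow> nat \<Rightarrow> nat \<Rightarrow> pt set" where
  "piece a b c = {z \<in> V. (z \<in> p ` {..k} \<and> a \<le> idx z \<and> idx z \<le> b)
                        \<or> (z \<notin> p ` {..k} \<and> c \<le> idx z \<and> idx z \<le> b)}"

lemma p_in_piece: "a \<le> j \<Longrightarrow> j \<le> b \<Longrightarrow> b \<le> k \<Longrightarrow> p j \<in> piece a b c"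
  unfolding piece_def using p_in_V idx_p by auto

lemma piece_mono: "a' \<le> a \<Longrightarrow> c' \<le> c \<Longrightarrow> b \<le> b' \<Longrightarrow> piece a b c \<subseteq> piece a' b' c'"
  unfolding piece_def by auto

lemma piece_induct:
  assumes "a \<le> c" "b \<le> k" "a \<le> b" "Q (p a)"
    and edge_step: "\<And>x y. {x, y} \<in> E \<Longrightarrow> x \<noteq> y \<Longrightarrow> x \<in> piece a b c \<Longrightarrow> y \<in> piece a b c \<Longrightarrow>
      Q x \<Longrightarrow> Q y"
    and "z \<in> piece a b c"
  shows "Q z"
proof -
  have Qp: "Q (p j)" if "a \<le> j" "j \<le> b" for j
    using that
  proof (induction j rule: dec_induct)
    case base
    show ?case using \<open>Q (p a)\<close> .
  next
    case (step j)
    then show ?case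
      using edge_step[OF path_edge] p_in_piece p_eq_iff[of j "Suc j"] \<open>b \<le> k\<close> by simp
  qed
  show ?thesis
  proof (cases "z \<in> p ` {..k}")
    case True
    then show ?thesis
      using \<open>z \<in> piece a b c\<close> p_idx Qp[of "idx z"] by (auto simp: piece_def)
  next
    case False
    then have "z \<in> V" "c \<le> idx z" "idx z \<le> b"
      using \<open>z \<in> piece a b c\<close> by (auto simp: piece_def)
    moreover have "{p (idx z), z} \<in> E"
      using tooth[OF \<open>z \<in> V\<close> False] by (simp add: insert_commute)
    moreover have "p (idx z) \<noteq> z"
      using False idx_le[OF \<open>z \<in> V\<close>] by (metis atMost_iff image_eqI)
    ultimately show ?thesis
      using edge_step[of "p (idx z)" z] Qp[of "idx z"] p_in_piece \<open>a \<le> c\<close> \<open>b \<le> k\<close> \<open>z \<in> piece a b c\<close>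
      by simp
  qed
qed

text \<open>A piece is connected through comb edges, and the line through a comb edge separates no
  comb edge; so a comb edge disjoint from a piece sees the whole piece strictly on one side.\<close>
lemma piece_one_side:
  assumes "{u, v} \<in> E" "u \<noteq> v" "a \<le> c" "b \<le> k" "a \<le> b"
    and "u \<notin> piece a b c" "v \<notin> piece a b c" "z \<in> piece a b c"
  shows "orient u v z * orient u v (p a) > 0"
proof -
  have "u \<in> V" "v \<in> V"
    using edge_in_V[OF assms(1)] by auto
  have nz: "orient u v x \<noteq> 0" if "x \<in> piece a b c" for x
  proof -
    have "x \<in> V" "x \<noteq> u" "x \<noteq> v"
      using that assms(6,7) by (auto simp: piece_def)
    then show ?thesis
      using orient_nonzero[OF \<open>u \<in> V\<close> \<open>v \<in> V\<close>] assms(2) by metis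
  qed
  show ?thesis
  proof (rule piece_induct[OF assms(3-5) _ _ assms(8)])
    show "orient u v (p a) * orient u v (p a) > 0"
      using nz[OF p_in_piece[of a a b c]] assms(4,5) by (metis not_real_square_gt_zero order_refl)
  next
    fix x y
    assume xy: "{x, y} \<in> E" "x \<noteq> y" "x \<in> piece a b c" "y \<in> piece a b c"
      and "orient u v x * orient u v (p a) > 0"
    have "0 \<le> orient u v x * orient u v y"
      using line_avoids_edges[OF assms(1) xy(1) assms(2)] .
    then have "orient u v y * orient u v x > 0"
      using nz xy(3,4) by (simp add: order_le_less mult.commute)
    then show "orient u v y * orient u v (p a) > 0"
      using \<open>orient u v x * orient u v (p a) > 0\<close> by (rule same_sign_trans)
  qed
qed

lemma angular_order_tooth:
  assumes "l \<in> V" "idx l = i" "l \<noteq> p i" "r \<in> V" "i < idx r"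
  shows "\<sigma> * orient (p i) r l > 0"
proof -
  have "i < k"
    using assms(4,5) idx_le[of r] by simp
  have "l \<notin> p ` {..k}"
    using p_idx[OF assms(1)] assms(2,3) by auto
  then have "{p i, l} \<in> E"
    using tooth[OF assms(1)] assms(2) by (simp add: insert_commute)
  moreover have "p i \<notin> piece (Suc i) k (Suc i)" "l \<notin> piece (Suc i) k (Suc i)"
    using \<open>i < k\<close> idx_p assms(2) by (auto simp: piece_def)
  moreover have "r \<in> piece (Suc i) k (Suc i)"
    using assms(4,5) idx_le by (auto simp: piece_def)
  ultimately have "orient (p i) l r * orient (p i) l (p (Suc i)) > 0"
    using piece_one_side[of "p i" l "Suc i" "Suc i" k] assms(3) \<open>i < k\<close> by auto
  moreover have "\<sigma> * orient (p i) (p (Suc i)) l > 0"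
    using path_side[OF \<open>i < k\<close> assms(1)] assms(3) ne_p_of_idx[OF assms(1), of "Suc i"] assms(2) \<open>i < k\<close>
    by simp
  ultimately show ?thesis
    using sign orient_swap[of "p i" l "p (Suc i)"] orient_swap[of "p i" l r]
    by (auto simp: zero_less_mult_iff mult_less_0_iff)
qed

lemma angular_order_predecessor:
  assumes "0 < i" "r \<in> V" "i < idx r"
  shows "\<sigma> * orient (p i) r (p (i - 1)) > 0"
proof -
  have "i < k"
    using assms(2,3) idx_le[of r] by simp
  have "r \<noteq> p (i - 1)" "r \<noteq> p i"
    using ne_p_of_idx[OF assms(2)] assms(3) \<open>i < k\<close> by auto
  then have "\<sigma> * orient (p (i - 1)) (p i) r > 0"
    using path_side[of "i - 1" r] assms \<open>i < k\<close> by simp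
  then show ?thesis
    using orient_rotate[of "p i" r "p (i - 1)"] by simp
qed

lemma left_neighbour:
  assumes "l \<in> V" "idx l < i" "l \<noteq> p (i - 1)" "i \<le> k"
  obtains w where "{l, w} \<in> E" "w \<noteq> l" "idx w < i"
proof (cases "l \<in> p ` {..k}")
  case True
  then have "p (idx l) = l"
    using p_idx assms(1) by auto
  then have "Suc (idx l) < i"
    using assms(2,3) by (metis Suc_lessI Suc_pred less_nat_zero_code not_gr_zero diff_Suc_1)
  then show thesis
    using that[of "p (Suc (idx l))"] path_edge[of "idx l"] idx_p assms(4)
      \<open>p (idx l) = l\<close> p_eq_iff[of "idx l" "Suc (idx l)"] by auto
next
  case False
  have "{l, p (idx l)} \<in> E"
    using tooth[OF assms(1) False] by simp
  moreover have "p (idx l) \<noteq> l"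
    using False idx_le[OF assms(1)] by (metis atMost_iff image_eqI)
  ultimately show thesis
    using that[of "p (idx l)"] idx_le idx_p assms(1,2) by auto
qed

text \<open>If an edge s t of the part of the comb beyond p i crossed the line through p i and l,
  by \<open>crossing_line_separates\<close> its line would separate p i from l; but its line leaves the
  part of the comb up to p (i - 1), which contains l, on one side, and does not cross the
  edge from p (i - 1) to p i.\<close>
lemma ray_side_preserved:
  assumes "l \<in> V" "idx l < i" "i < k" "{l, w} \<in> E" "w \<noteq> l" "idx w < i"
    and st: "s \<in> piece (Suc i) k (Suc i)" "t \<in> piece (Suc i) k (Suc i)" "{s, t} \<in> E" "s \<noteq> t"
    and s_below: "\<sigma> * orient (p i) l s < 0"
  shows "\<sigma> * orient (p i) l t < 0"
proof (rule ccontr)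
  define P q where "P = p i" "q = p (Suc i)"
  assume "\<not> \<sigma> * orient P l t < 0"
  have "s \<in> V" "t \<in> V" "i < idx s" "i < idx t" "P \<in> V"
    using st p_in_V \<open>i < k\<close> by (auto simp: piece_def P_q_def)
  have ne: "s \<noteq> P" "t \<noteq> P" "s \<noteq> l" "t \<noteq> l" "l \<noteq> P" "l \<noteq> q"
    using \<open>i < idx s\<close> \<open>i < idx t\<close> assms(2) idx_p \<open>i < k\<close> by (auto simp: P_q_def)
  have "orient P l t \<noteq> 0"
    using orient_nonzero[OF \<open>P \<in> V\<close> assms(1) \<open>t \<in> V\<close>] ne by auto
  then have t_above: "\<sigma> * orient P l t > 0"
    using \<open>\<not> \<sigma> * orient P l t < 0\<close> sign by auto
  have q_side: "\<sigma> * orient P q z \<ge> 0" if "z \<in> V" "z \<noteq> P" for z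
    using path_side[OF \<open>i < k\<close> that(1)] that(2) by (cases "z = q") (auto simp: P_q_def orient_def)
  have "l \<notin> piece i k (Suc i)" "w \<notin> piece i k (Suc i)"
    using assms(2,6) by (auto simp: piece_def)
  then have w_side: "orient l w z * orient l w P > 0" if "z \<in> piece (Suc i) k (Suc i)" for z
    using piece_one_side[OF assms(4) assms(5)[symmetric], of i "Suc i" k z] \<open>i < k\<close>
      that piece_mono[of i "Suc i" "Suc i" "Suc i" k k] by (auto simp: P_q_def)
  have "orient s t P * orient s t l < 0"
  proof (rule crossing_line_separates[OF sign s_below[folded P_q_def] t_above])
    show "\<sigma> * orient P q s \<ge> 0" "\<sigma> * orient P q t \<ge> 0"
      using q_side \<open>s \<in> V\<close> \<open>t \<in> V\<close> ne by auto
    show "\<sigma> * orient P q l > 0"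
      using path_side[OF \<open>i < k\<close> assms(1)] ne by (simp add: P_q_def)
    show "orient l w s * orient l w P > 0" "orient l w t * orient l w P > 0"
      using w_side st(1,2) by auto
    show "orient P t s \<noteq> 0" "orient s t P \<noteq> 0"
      using orient_nonzero \<open>s \<in> V\<close> \<open>t \<in> V\<close> \<open>P \<in> V\<close> ne st(4) by metis+
  qed
  moreover have "orient s t l * orient s t (p (i - 1)) > 0"
  proof -
    have "s \<notin> piece 0 (i - 1) 0" "t \<notin> piece 0 (i - 1) 0"
      using \<open>i < idx s\<close> \<open>i < idx t\<close> by (auto simp: piece_def)
    moreover have "l \<in> piece 0 (i - 1) 0"
      using assms(1,2) by (auto simp: piece_def)
    moreover have "p (i - 1) \<in> piece 0 (i - 1) 0"
      using p_in_piece \<open>i < k\<close> by simp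
    ultimately show ?thesis
      using piece_one_side[OF st(3,4), of 0 0 "i - 1"] \<open>i < k\<close>
      by (metis same_sign_trans mult.commute le0 less_imp_diff_less order_less_imp_le)
  qed
  moreover have "0 \<le> orient s t (p (i - 1)) * orient s t P"
    using line_avoids_edges[OF st(3) path_edge[of "i - 1"] st(4)] assms(2,3)
    by (simp add: P_q_def)
  ultimately show False
    by (auto simp: zero_less_mult_iff mult_less_0_iff zero_le_mult_iff)
qed

lemma ray_side_beyond:
  assumes "l \<in> V" "idx l < i" "l \<noteq> p (i - 1)" "i < k" "z \<in> piece (Suc i) k (Suc i)"
  shows "\<sigma> * orient (p i) l z < 0"
proof -
  obtain w where w: "{l, w} \<in> E" "w \<noteq> l" "idx w < i"
    using left_neighbour[OF assms(1-3)] assms(4) by auto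
  show ?thesis
  proof (rule piece_induct[OF _ _ _ _ _ assms(5)])
    show "\<sigma> * orient (p i) l (p (Suc i)) < 0"
      using path_side[OF assms(4,1)] ne_p_of_idx[OF assms(1)] assms(2,4)
        orient_swap[of "p i" l "p (Suc i)"] by simp
  next
    fix s t
    assume "{s, t} \<in> E" "s \<noteq> t" "s \<in> piece (Suc i) k (Suc i)" "t \<in> piece (Suc i) k (Suc i)"
      "\<sigma> * orient (p i) l s < 0"
    then show "\<sigma> * orient (p i) l t < 0"
      using ray_side_preserved[OF assms(1,2,4) w] by blast
  qed (use assms(4) in auto)
qed

lemma angular_order:
  assumes l: "l \<in> V" "idx l \<le> i" "l \<noteq> p i" and r: "r \<in> V" "i < idx r"
  shows "\<sigma> * orient (p i) r l > 0"
proof -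
  consider "idx l = i" | "l = p (i - 1)" "0 < i" | "idx l < i" "l \<noteq> p (i - 1)"
    using l(2) by linarith
  then show ?thesis
  proof cases
    case 1
    then show ?thesis using angular_order_tooth l r by blast
  next
    case 2
    then show ?thesis using angular_order_predecessor r by blast
  next
    case 3
    have "i < k" "r \<noteq> l" "r \<noteq> p i"
      using r 3(1) idx_le[of r] ne_p_of_idx[OF r(1), of i] by auto
    then have "orient (p i) r l \<noteq> 0"
      using orient_nonzero[OF p_in_V r(1) l(1)] l(3) by auto
    moreover have "r \<in> piece (Suc i) k (Suc i)"
      using r idx_le by (auto simp: piece_def)
    ultimately show ?thesis
      using ray_side_beyond[OF l(1) 3 \<open>i < k\<close>] sign orient_swap[of "p i" r l] by fastforce
  qed
qed

lemma forward_backward_segments_cross: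
  assumes "i < k" "y \<in> V" "i < idx y" "y \<noteq> p (Suc i)" "x \<in> V" "idx x \<le> i" "x \<noteq> p i"
  shows "convex hull {p i, y} \<inter> convex hull {p (Suc i), x} \<noteq> {}"
proof (rule straddling_segments_meet)
  interpret reversed: comb_layout V E "\<lambda>j. p (k - j)" k "\<lambda>z. k - idx z" "- \<sigma>"
    by (rule reverse)
  have "k - (k - Suc i) = Suc i"
    using assms(1) by simp
  then have backward_angle: "- \<sigma> * orient (p (Suc i)) x y > 0"
    using reversed.angular_order[of y "k - Suc i" x] assms(2-7) by simp
  have forward_angle: "\<sigma> * orient (p i) y x > 0"
    using angular_order[of x i y] assms by simp
  have "y \<noteq> p i" "x \<noteq> p (Suc i)"
    using assms(3,6) ne_p_of_idx assms(1,2,5) by auto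
  then have "\<sigma> * orient (p i) (p (Suc i)) y > 0" "\<sigma> * orient (p i) (p (Suc i)) x > 0"
    using path_side[OF assms(1)] assms(2,4,5,7) by auto
  then show "orient (p i) y (p (Suc i)) * orient (p i) y x < 0"
    "orient (p (Suc i)) x (p i) * orient (p (Suc i)) x y < 0"
    using sign forward_angle backward_angle orient_swap[of "p i" y "p (Suc i)"] orient_rotate[of "p (Suc i)" x "p i"]
    by (auto simp: zero_less_mult_iff mult_less_0_iff)
qed

lemma switching_index:
  assumes "simple_spanning V H" "E \<inter> H = {}"
  obtains i x y where "i < k" "y \<in> V" "{p i, y} \<in> H" "i < idx y"
    "x \<in> V" "x \<noteq> p (Suc i)" "{p (Suc i), x} \<in> H" "idx x \<le> i"
proof -
  define forward where "forward j \<longleftrightarrow> (\<exists>y\<in>V. {p j, y} \<in> H \<and> j < idx y)" for j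
  have "forward 0"
  proof -
    obtain y where y: "y \<in> V" "y \<noteq> p 0" "{p 0, y} \<in> H"
      using simple_spanning_neighbour[OF assms(1) p_in_V] by blast
    have "0 < idx y"
    proof (cases "y \<in> p ` {..k}")
      case True
      then show ?thesis
        using p_idx[OF y(1)] y(2) by (metis gr0I)
    next
      case False
      then show ?thesis
        using tooth[OF y(1)] by simp
    qed
    then show ?thesis
      using y unfolding forward_def by blast
  qed
  moreover have "\<not> forward k"
    unfolding forward_def using idx_le leD by blast
  ultimately obtain i where i: "i < k" "forward i" "\<not> forward (Suc i)"
    using nat_transition[of forward k] by blast
  obtain y where y: "y \<in> V" "{p i, y} \<in> H" "i < idx y"
    using i(2) unfolding forward_def by blast
  obtain x where x: "x \<in> V" "x \<noteq> p (Suc i)" "{p (Suc i), x} \<in> H"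
    using simple_spanning_neighbour[OF assms(1) p_in_V[of "Suc i"]] i(1) by auto
  have "idx x \<le> i"
  proof (rule ccontr)
    assume "\<not> idx x \<le> i"
    moreover have "\<not> Suc i < idx x"
      using i(3) x(1,3) unfolding forward_def by blast
    ultimately have "idx x = Suc i"
      by simp
    then have "x \<notin> p ` {..k}"
      using x(2) p_idx[OF x(1)] by auto
    then have "{x, p (Suc i)} \<in> E"
      using tooth[OF x(1)] \<open>idx x = Suc i\<close> by simp
    then show False
      using x(3) assms(2) by (auto simp: insert_commute)
  qed
  then show thesis
    using that i(1) x y by blast
qed

lemma meets_simple_spanning:
  assumes "simple_spanning V H"
  shows "E \<inter> H \<noteq> {}"
proof
  assume disjoint: "E \<inter> H = {}"
  obtain i x y where i: "i < k" and y: "y \<in> V" "{p i, y} \<in> H" "i < idx y"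
    and x: "x \<in> V" "x \<noteq> p (Suc i)" "{p (Suc i), x} \<in> H" "idx x \<le> i"
    using switching_index[OF assms disjoint] .
  have path_edge_i: "{p i, p (Suc i)} \<in> E"
    using path_edge[OF i] .
  have "x \<noteq> p i"
  proof
    assume "x = p i"
    then have "{p i, p (Suc i)} \<in> H"
      using x(3) by (simp add: insert_commute)
    then show False
      using disjoint path_edge_i by blast
  qed
  moreover have "y \<noteq> p (Suc i)"
    using disjoint path_edge_i y(2) by blast
  ultimately have "convex hull {p i, y} \<inter> convex hull {p (Suc i), x} \<noteq> {}"
    using forward_backward_segments_cross[OF i y(1,3) _ x(1,4)] by blast
  moreover have "{p i, y} \<inter> {p (Suc i), x} = {}"
    using \<open>x \<noteq> p i\<close> \<open>y \<noteq> p (Suc i)\<close> x(2,4) p_eq_iff[of i "Suc i"] i y(3) by auto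
  moreover have "noncrossing H"
    using assms unfolding simple_spanning_def by blast
  moreover have "{p i, y} \<noteq> {p (Suc i), x}"
    using \<open>{p i, y} \<inter> {p (Suc i), x} = {}\<close> by auto
  ultimately show False
    using x(3) y(2) unfolding noncrossing_def by blast
qed

end

lemma boundary_path_common_side:
  assumes "finite V" "general_position V" "inj_on p {..k}" "\<And>j. j \<le> k \<Longrightarrow> p j \<in> V"
    and "\<And>j. j < k \<Longrightarrow> convex hull {p j, p (Suc j)} \<subseteq> frontier (convex hull V)" "0 < k"
  obtains \<sigma> :: real where "\<sigma> = 1 \<or> \<sigma> = -1"
    "\<And>j z. j < k \<Longrightarrow> z \<in> V \<Longrightarrow> z \<noteq> p j \<Longrightarrow> z \<noteq> p (Suc j) \<Longrightarrow>
      \<sigma> * orient (p j) (p (Suc j)) z > 0"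
proof -
  have "\<exists>s. (s = 1 \<or> s = -1) \<and>
      (\<forall>z\<in>V. z \<noteq> p j \<longrightarrow> z \<noteq> p (Suc j) \<longrightarrow> s * orient (p j) (p (Suc j)) z > 0)" if "j < k" for j
  proof -
    have "p j \<in> V" "p (Suc j) \<in> V" "p j \<noteq> p (Suc j)"
      using assms(3,4) that by (auto dest: inj_onD)
    then show ?thesis
      using frontier_edge_strict_side[OF assms(1,2), of "p j" "p (Suc j)"] assms(5)[OF that]
      by metis
  qed
  then obtain S where S: "\<And>j. j < k \<Longrightarrow> (S j = 1 \<or> S j = -1) \<and>
      (\<forall>z\<in>V. z \<noteq> p j \<longrightarrow> z \<noteq> p (Suc j) \<longrightarrow> S j * orient (p j) (p (Suc j)) z > 0)"
    by metis
  have common: "S j = S 0" if "j < k" for j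
    using that
  proof (induction j)
    case (Suc j)
    have distinct: "p j \<noteq> p (Suc (Suc j))" "p (Suc j) \<noteq> p (Suc (Suc j))" "p j \<noteq> p (Suc j)"
      using assms(3) Suc.prems by (auto dest: inj_onD)
    \<comment> \<open>both edges see the third vertex of the two with the same orientation\<close>
    have "S j * orient (p j) (p (Suc j)) (p (Suc (Suc j))) > 0"
      "S (Suc j) * orient (p (Suc j)) (p (Suc (Suc j))) (p j) > 0"
      using S[of j] S[of "Suc j"] Suc.prems assms(4) distinct by auto
    then have "S (Suc j) = S j"
      using S[of j] S[of "Suc j"] Suc.prems orient_rotate[of "p (Suc j)" "p (Suc (Suc j))" "p j"]
      by (auto simp: zero_less_mult_iff)
    then show ?case
      using Suc by simp
  qed simp
  show thesis
  proof (rule that[of "S 0"])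
    show "S 0 = 1 \<or> S 0 = -1"
      using S[OF assms(6)] by blast
  next
    fix j z assume "j < k" "z \<in> V" "z \<noteq> p j" "z \<noteq> p (Suc j)"
    then show "S 0 * orient (p j) (p (Suc j)) z > 0"
      using S[of j] common[of j] by auto
  qed
qed

lemma path_interior_nth:
  assumes "x \<in> path_interior ps"
  obtains j where "0 < j" "j < length ps - 1" "ps ! j = x"
proof -
  obtain m where m: "m < length (butlast (tl ps))" "x = butlast (tl ps) ! m"
    using assms unfolding path_interior_def by (auto simp: in_set_conv_nth)
  then have "x = ps ! Suc m"
    by (simp add: nth_butlast nth_tl)
  then show thesis
    using that[of "Suc m"] m(1) by simp
qed

lemma path_edges_nth: "Suc j < length ps \<Longrightarrow> {ps ! j, ps ! Suc j} \<in> path_edges ps"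
  unfolding path_edges_def by (force simp: in_set_zip nth_tl)

lemma comb_layout_of_comb:
  assumes "finite V" "general_position V" "comb V B"
  obtains p k idx \<sigma> where "comb_layout V B p k idx \<sigma>"
proof -
  obtain ps where len: "length ps \<ge> 2" and dist: "distinct ps" and sub: "set ps \<subseteq> V"
    and bd: "boundary_edges V B = path_edges ps"
    and teeth: "\<forall>v\<in>V - set ps. \<exists>w\<in>path_interior ps. {v, w} \<in> B"
    using assms(3) unfolding comb_def by blast
  obtain \<tau> where tau: "\<And>z. z \<in> V \<Longrightarrow> z \<notin> set ps \<Longrightarrow> \<tau> z \<in> path_interior ps \<and> {z, \<tau> z} \<in> B"
    using teeth by (metis DiffI)
  define k where "k = length ps - 1"
  define p where "p j = ps ! j" for j
  define idx where "idx z = inv_into {..k} p (if z \<in> set ps then z else \<tau> z)" for z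
  have k: "length ps = Suc k" "0 < k"
    using len by (auto simp: k_def)
  have inj: "inj_on p {..k}"
    using dist k(1) by (auto intro!: inj_onI simp: p_def nth_eq_iff_index_eq)
  have path_set: "p ` {..k} = set ps"
    using k(1) by (auto simp: p_def set_conv_nth less_Suc_eq_le)
  have idx_tooth: "0 < idx z \<and> idx z < k \<and> p (idx z) = \<tau> z"
    if z: "z \<in> V" "z \<notin> set ps" for z
  proof -
    obtain j where j: "0 < j" "j < k" "p j = \<tau> z"
      using path_interior_nth[of "\<tau> z" ps] tau[OF z] k(1) by (metis p_def diff_Suc_1)
    then show ?thesis
      using z inv_into_f_f[OF inj, of j] by (simp add: idx_def)
  qed
  have boundary: "{p j, p (Suc j)} \<in> B \<and> convex hull {p j, p (Suc j)} \<subseteq> frontier (convex hull V)"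
    if "j < k" for j
    using path_edges_nth[of j ps] bd that k(1) unfolding boundary_edges_def p_def by auto
  obtain \<sigma> where \<sigma>: "\<sigma> = 1 \<or> \<sigma> = -1"
    "\<And>j z. j < k \<Longrightarrow> z \<in> V \<Longrightarrow> z \<noteq> p j \<Longrightarrow> z \<noteq> p (Suc j) \<Longrightarrow>
      \<sigma> * orient (p j) (p (Suc j)) z > 0"
    using boundary_path_common_side[OF assms(1,2) inj _ _ k(2)] boundary sub path_set by blast
  have "comb_layout V B p k idx \<sigma>"
  proof
    fix z
    assume "z \<in> V"
    show "idx z \<le> k"
      using idx_tooth[OF \<open>z \<in> V\<close>] path_set inv_into_into[of z p "{..k}"]
      by (cases "z \<in> set ps") (auto simp: idx_def)
    show "z \<in> p ` {..k} \<Longrightarrow> p (idx z) = z"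
      using path_set by (simp add: idx_def f_inv_into_f)
    show "z \<notin> p ` {..k} \<Longrightarrow> 0 < idx z \<and> idx z < k \<and> {z, p (idx z)} \<in> B"
      using idx_tooth[OF \<open>z \<in> V\<close>] tau[OF \<open>z \<in> V\<close>] path_set by simp
  next
    fix a b c d
    show "{a, b} \<in> B \<Longrightarrow> {c, d} \<in> B \<Longrightarrow> a \<noteq> b \<Longrightarrow> 0 \<le> orient a b c * orient a b d"
      using assms(3) unfolding comb_def line_crosses_def by (meson not_le)
    show "{a, b} \<in> B \<Longrightarrow> a \<in> V \<and> b \<in> V"
      using assms(3) unfolding comb_def simple_spanning_def complete_edges_def
      by (auto simp: doubleton_eq_iff)
    show "a \<in> V \<Longrightarrow> b \<in> V \<Longrightarrow> c \<in> V \<Longrightarrow> a \<noteq> b \<Longrightarrow> a \<noteq> c \<Longrightarrow> b \<noteq> c \<Longrightarrow> orient a b c \<noteq> 0"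
      using general_position_orient_nonzero[OF assms(2)] by blast
  qed (use k inj boundary \<sigma> path_set sub in \<open>auto simp: p_def\<close>)
  then show thesis
    by (rule that)
qed

theorem theorem4:
  fixes V :: "pt set" and B :: "pt set set"
  assumes "finite V"
    and "general_position V"
    and "is_star V B \<or> comb V B"
  shows "\<forall>H. simple_spanning V H \<longrightarrow> B \<inter> H \<noteq> {}"
proof (intro allI impI)
  fix H
  assume H: "simple_spanning V H"
  show "B \<inter> H \<noteq> {}"
  proof (cases "is_star V B")
    case True
    then obtain v where v: "v \<in> V" "B = star V v"
      unfolding is_star_def by blast
    obtain y where "y \<in> V" "y \<noteq> v" "{v, y} \<in> H"
      using simple_spanning_neighbour[OF H v(1)] .
    then show ?thesis
      using v unfolding star_def by blast
  next
    case False
    then obtain p k idx \<sigma> where "comb_layout V B p k idx \<sigma>"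
      using comb_layout_of_comb[OF assms(1,2)] assms(3) by blast
    then show ?thesis
      using comb_layout.meets_simple_spanning H by blast
  qed
qed

end
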